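(* Let $X$ be a proper CAT(0)-space and $g$ an isometry of $X$ with unbounded orbits. Then the centralizer of $g$ in the isometry group of $X$ fixes a point in the visual boundary $\partial X$ of $X$.
   Context: A metric space is proper if closed bounded sets are compact. The visual boundary $\partial X$ of a proper CAT(0)-space is the set of equivalence classes of geodesic rays (two rays equivalent if at bounded distance), with the cone topology; isometries act on it naturally. *)

theory Defs
  imports "HOL-Analysis.Analysis"
begin

text \<open>The whole type 'a (a metric space) plays the role of the space X.\<close>

definition proper_space :: "'a::metric_space itself \<Rightarrow> bool" where
  "proper_space _ \<longleftrightarrow> (\<forall>S::'a set. closed S \<and> bounded S \<longrightarrow> compact S)"

definition geodesic_segment :: "(real \<Rightarrow> 'a::metric_space) \<Rightarrow> 'a \<Rightarrow> 'a \<Rightarrow> bool" where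
  "geodesic_segment c x y \<longleftrightarrow> c 0 = x \<and> c (dist x y) = y \<and>
     (\<forall>s\<in>{0..dist x y}. \<forall>t\<in>{0..dist x y}. dist (c s) (c t) = \<bar>s - t\<bar>)"

definition geodesic_space :: "'a::metric_space itself \<Rightarrow> bool" where
  "geodesic_space _ \<longleftrightarrow> (\<forall>x y::'a. \<exists>c. geodesic_segment c x y)"

text \<open>Point of the Euclidean segment [a,b] at distance t from a (where d = |a - b|).\<close>
definition seg_pt :: "real^2 \<Rightarrow> real^2 \<Rightarrow> real \<Rightarrow> real \<Rightarrow> real^2" where
  "seg_pt a b d t = (1 - t / d) *\<^sub>R a + (t / d) *\<^sub>R b"

text \<open>Pairs (point on the geodesic triangle, its comparison point in the Euclidean plane).\<close>
definition comparison_pairs ::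
  "(real \<Rightarrow> 'a::metric_space) \<Rightarrow> (real \<Rightarrow> 'a) \<Rightarrow> (real \<Rightarrow> 'a) \<Rightarrow> 'a \<Rightarrow> 'a \<Rightarrow> 'a
   \<Rightarrow> real^2 \<Rightarrow> real^2 \<Rightarrow> real^2 \<Rightarrow> ('a \<times> (real^2)) set" where
  "comparison_pairs c1 c2 c3 x y z u v w =
     {(c1 s, seg_pt u v (dist x y) s) | s. s \<in> {0..dist x y}} \<union>
     {(c2 s, seg_pt v w (dist y z) s) | s. s \<in> {0..dist y z}} \<union>
     {(c3 s, seg_pt w u (dist z x) s) | s. s \<in> {0..dist z x}}"

definition CAT0 :: "'a::metric_space itself \<Rightarrow> bool" where
  "CAT0 T \<longleftrightarrow> geodesic_space T \<and>
    (\<forall>(x::'a) y z c1 c2 c3 (u::real^2) v w.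
       geodesic_segment c1 x y \<and> geodesic_segment c2 y z \<and> geodesic_segment c3 z x \<and>
       dist u v = dist x y \<and> dist v w = dist y z \<and> dist w u = dist z x \<longrightarrow>
       (\<forall>(p, p') \<in> comparison_pairs c1 c2 c3 x y z u v w.
         \<forall>(q, q') \<in> comparison_pairs c1 c2 c3 x y z u v w. dist p q \<le> dist p' q'))"

definition isometries :: "('a::metric_space \<Rightarrow> 'a) set" where
  "isometries = {f. bij f \<and> (\<forall>x y. dist (f x) (f y) = dist x y)}"

definition centralizer :: "('a::metric_space \<Rightarrow> 'a) \<Rightarrow> ('a \<Rightarrow> 'a) set" where
  "centralizer g = {h \<in> isometries. h \<circ> g = g \<circ> h}"

definition cyclic_orbit :: "('a \<Rightarrow> 'a) \<Rightarrow> 'a \<Rightarrow> 'a set" where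
  "cyclic_orbit g x = {(g ^^ n) x | n. True} \<union> {(inv g ^^ n) x | n. True}"

definition geodesic_ray :: "(real \<Rightarrow> 'a::metric_space) \<Rightarrow> bool" where
  "geodesic_ray c \<longleftrightarrow> (\<forall>s\<ge>0. \<forall>t\<ge>0. dist (c s) (c t) = \<bar>s - t\<bar>)"

definition asymptotic :: "(real \<Rightarrow> 'a::metric_space) \<Rightarrow> (real \<Rightarrow> 'a) \<Rightarrow> bool" where
  "asymptotic c c' \<longleftrightarrow> (\<exists>B. \<forall>t\<ge>0. dist (c t) (c' t) \<le> B)"

definition visual_boundary :: "'a::metric_space itself \<Rightarrow> (real \<Rightarrow> 'a) set set" where
  "visual_boundary _ = {{c'. geodesic_ray c' \<and> asymptotic c c'} | c. geodesic_ray c}"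

definition boundary_action :: "('a \<Rightarrow> 'a) \<Rightarrow> (real \<Rightarrow> 'a) set \<Rightarrow> (real \<Rightarrow> 'a) set" where
  "boundary_action h \<xi> = {h \<circ> c | c. c \<in> \<xi>}"

end

theory Submission
  imports Defs
begin

text \<open>Fix a base point \<open>x\<^sub>0\<close> and geodesic segments from \<open>x\<^sub>0\<close> to points of its
  \<open>g\<close>-orbit escaping to infinity. An isometry \<open>h\<close> commuting with \<open>g\<close> moves every orbit
  point exactly as far as \<open>x\<^sub>0\<close>; in a CAT(0) space the displacement \<open>x \<mapsto> d(x, h x)\<close> is
  convex along geodesics, so \<open>h\<close> moves every point of these segments by at most
  \<open>d(x\<^sub>0, h x\<^sub>0)\<close>. Properness makes the product of the balls \<open>B(x\<^sub>0, |t|)\<close> compact, so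
  the segments have an adherent point there, a geodesic ray which inherits the displacement
  bound. Thus \<open>h\<close> keeps the ray at bounded distance from itself and fixes its endpoint.\<close>

lemma CAT0_geodesic_exists:
  assumes "CAT0 TYPE('a::metric_space)"
  shows "\<exists>c. geodesic_segment c (x::'a) y"
  using assms unfolding CAT0_def geodesic_space_def by blast

lemma geodesic_segment_reverse:
  assumes "geodesic_segment c x y"
  shows "geodesic_segment (\<lambda>s. c (dist x y - s)) y x"
  using assms unfolding geodesic_segment_def by (auto simp: dist_commute)

lemma geodesic_segment_isometric_image:
  assumes "geodesic_segment c x y" and "\<forall>a b. dist (h a) (h b) = dist a b"
  shows "geodesic_segment (h \<circ> c) (h x) (h y)"
  using assms unfolding geodesic_segment_def by auto

lemma geodesic_segment_start: "geodesic_segment c x y \<Longrightarrow> c 0 = x"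
  unfolding geodesic_segment_def by blast

lemma dist_geodesic_segment_start:
  assumes "geodesic_segment c x y" and "0 \<le> s" and "s \<le> dist x y"
  shows "dist x (c s) = s"
proof -
  have "dist (c 0) (c s) = s"
    using assms unfolding geodesic_segment_def by auto
  then show ?thesis
    using geodesic_segment_start[OF assms(1)] by simp
qed

lemma norm_vector_2: "norm (vector [x, y] :: real^2) = sqrt (x\<^sup>2 + y\<^sup>2)"
  by (simp add: norm_vec_def L2_set_def sum_2)

lemma diff_vector_2: "(vector [a, b] :: real^2) - vector [c, d] = vector [a - c, b - d]"
  by (simp add: vec_eq_iff forall_2)

lemma plane_triangle_exists:
  fixes a b c :: real
  assumes "0 \<le> a" "0 \<le> b" "0 \<le> c" "c \<le> a + b" "a \<le> b + c" "b \<le> a + c"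
  shows "\<exists>u v w :: real^2. dist u v = a \<and> dist v w = c \<and> dist w u = b"
proof (cases "a = 0")
  case True
  then have "dist (vector [0, 0] :: real^2) (vector [0, 0]) = a"
    and "dist (vector [0, 0] :: real^2) (vector [b, 0]) = c"
    and "dist (vector [b, 0] :: real^2) (vector [0, 0]) = b"
    using assms by (simp_all add: dist_norm norm_vector_2 diff_vector_2)
  then show ?thesis by blast
next
  case False
  then have "a > 0" using assms by auto
  text \<open>The third vertex is \<open>(p, ht)\<close>, with \<open>p\<close> given by the law of cosines.\<close>
  define p where "p = (a\<^sup>2 + b\<^sup>2 - c\<^sup>2) / (2 * a)"
  have "(a\<^sup>2 + b\<^sup>2 - c\<^sup>2)\<^sup>2 \<le> (2 * a * b)\<^sup>2"
  proof -
    have "(2 * a * b)\<^sup>2 - (a\<^sup>2 + b\<^sup>2 - c\<^sup>2)\<^sup>2 = (c\<^sup>2 - (a - b)\<^sup>2) * ((a + b)\<^sup>2 - c\<^sup>2)"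
      by (simp add: power2_eq_square algebra_simps)
    moreover have "(a - b)\<^sup>2 \<le> c\<^sup>2"
      using assms by (simp add: abs_le_square_iff[symmetric] abs_le_iff)
    moreover have "c\<^sup>2 \<le> (a + b)\<^sup>2"
      using assms by (simp add: abs_le_square_iff[symmetric])
    ultimately show ?thesis by (metis diff_ge_0_iff_ge zero_le_mult_iff)
  qed
  then have "p\<^sup>2 \<le> b\<^sup>2"
    using \<open>a > 0\<close> unfolding p_def by (simp add: power_divide field_simps power2_eq_square)
  define ht where "ht = sqrt (b\<^sup>2 - p\<^sup>2)"
  have ht2: "ht\<^sup>2 = b\<^sup>2 - p\<^sup>2"
    unfolding ht_def using \<open>p\<^sup>2 \<le> b\<^sup>2\<close> by simp
  have "(a - p)\<^sup>2 + ht\<^sup>2 = c\<^sup>2"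
    using ht2 \<open>a > 0\<close> unfolding p_def by (simp add: power2_eq_square field_simps)
  then have "dist (vector [0, 0] :: real^2) (vector [a, 0]) = a"
    and "dist (vector [a, 0] :: real^2) (vector [p, ht]) = c"
    and "dist (vector [p, ht] :: real^2) (vector [0, 0]) = b"
    using assms ht2 by (simp_all add: dist_norm norm_vector_2 diff_vector_2)
  then show ?thesis by blast
qed

lemma seg_pt_scaled:
  assumes "dist u v = d"
  shows "seg_pt u v d (l * d) = (1 - l) *\<^sub>R u + l *\<^sub>R v"
proof (cases "d = 0")
  case True
  then have "u = v" using assms by simp
  then show ?thesis using True by (simp add: seg_pt_def scaleR_diff_left)
next
  case False
  then show ?thesis by (simp add: seg_pt_def)
qed

lemma CAT0_dist_geodesics_common_start:
  fixes x y z :: "'a::metric_space"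
  assumes cat: "CAT0 TYPE('a)"
    and \<sigma>: "geodesic_segment \<sigma> x y" and \<tau>: "geodesic_segment \<tau> x z"
    and l: "0 \<le> l" "l \<le> 1"
  shows "dist (\<sigma> (l * dist x y)) (\<tau> (l * dist x z)) \<le> l * dist y z"
proof -
  obtain c where c: "geodesic_segment c y z"
    using CAT0_geodesic_exists[OF cat] by blast
  define \<tau>' where "\<tau>' = (\<lambda>s. \<tau> (dist x z - s))"
  have \<tau>': "geodesic_segment \<tau>' z x"
    unfolding \<tau>'_def using geodesic_segment_reverse[OF \<tau>] .
  obtain u v w :: "real^2"
    where uvw: "dist u v = dist x y" "dist v w = dist y z" "dist w u = dist z x"
    using plane_triangle_exists[of "dist x y" "dist z x" "dist y z"]
    by (metis dist_commute dist_triangle zero_le_dist add.commute)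
  define P where "P = comparison_pairs \<sigma> c \<tau>' x y z u v w"
  have comparison: "\<forall>(p, p') \<in> P. \<forall>(q, q') \<in> P. dist p q \<le> dist p' q'"
    using cat \<sigma> c \<tau>' uvw unfolding CAT0_def P_def by blast
  have "(\<sigma> (l * dist x y), seg_pt u v (dist x y) (l * dist x y)) \<in> P"
    and "(\<tau>' ((1 - l) * dist z x), seg_pt w u (dist z x) ((1 - l) * dist z x)) \<in> P"
    unfolding P_def comparison_pairs_def using l by (auto intro!: mult_left_le_one_le)
  then have "dist (\<sigma> (l * dist x y)) (\<tau>' ((1 - l) * dist z x))
      \<le> dist (seg_pt u v (dist x y) (l * dist x y)) (seg_pt w u (dist z x) ((1 - l) * dist z x))"
    using comparison by fast
  also have "\<dots> = dist ((1 - l) *\<^sub>R u + l *\<^sub>R v) (l *\<^sub>R w + (1 - l) *\<^sub>R u)"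
    using seg_pt_scaled[OF uvw(1)] seg_pt_scaled[OF uvw(3)] by simp
  also have "\<dots> = l * dist v w"
  proof -
    have "((1 - l) *\<^sub>R u + l *\<^sub>R v) - (l *\<^sub>R w + (1 - l) *\<^sub>R u) = l *\<^sub>R (v - w)"
      by (simp add: algebra_simps)
    then show ?thesis using l by (simp add: dist_norm)
  qed
  also have "\<tau>' ((1 - l) * dist z x) = \<tau> (l * dist x z)"
    unfolding \<tau>'_def by (simp add: dist_commute algebra_simps)
  finally show ?thesis using uvw by simp
qed

lemma CAT0_displacement_convex:
  fixes x q :: "'a::metric_space"
  assumes cat: "CAT0 TYPE('a)" and h: "\<forall>a b. dist (h a) (h b) = dist a b"
    and \<sigma>: "geodesic_segment \<sigma> x q" and l: "0 \<le> l" "l \<le> 1"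
  shows "dist (\<sigma> (l * dist x q)) (h (\<sigma> (l * dist x q)))
    \<le> (1 - l) * dist x (h x) + l * dist q (h q)"
proof -
  text \<open>Pass through the point \<open>m\<close> of a geodesic from \<open>x\<close> to \<open>h q\<close>, using the triangles
    \<open>(x, q, h q)\<close> and \<open>(h q, x, h x)\<close>.\<close>
  obtain \<tau> where \<tau>: "geodesic_segment \<tau> x (h q)"
    using CAT0_geodesic_exists[OF cat] by blast
  define m where "m = \<tau> (l * dist x (h q))"
  have "dist (\<sigma> (l * dist x q)) m \<le> l * dist q (h q)"
    unfolding m_def using CAT0_dist_geodesics_common_start[OF cat \<sigma> \<tau> l] .
  moreover have "dist m (h (\<sigma> (l * dist x q))) \<le> (1 - l) * dist x (h x)"
  proof -
    have "dist (\<tau> (dist x (h q) - (1 - l) * dist (h q) x))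
        ((h \<circ> \<sigma>) (dist (h x) (h q) - (1 - l) * dist (h q) (h x))) \<le> (1 - l) * dist x (h x)"
      using CAT0_dist_geodesics_common_start[OF cat geodesic_segment_reverse[OF \<tau>]
          geodesic_segment_reverse[OF geodesic_segment_isometric_image[OF \<sigma> h]]] l
      by simp
    moreover have "dist x (h q) - (1 - l) * dist (h q) x = l * dist x (h q)"
      and "dist (h x) (h q) - (1 - l) * dist (h q) (h x) = l * dist x q"
      using h by (simp_all add: dist_commute algebra_simps)
    ultimately show ?thesis unfolding m_def by simp
  qed
  ultimately show ?thesis
    using dist_triangle[of "\<sigma> (l * dist x q)" "h (\<sigma> (l * dist x q))" m] by linarith
qed

lemma CAT0_displacement_on_segment_le:
  fixes x q :: "'a::metric_space"
  assumes cat: "CAT0 TYPE('a)" and h: "\<forall>a b. dist (h a) (h b) = dist a b"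
    and \<sigma>: "geodesic_segment \<sigma> x q"
    and "dist x (h x) \<le> D" and "dist q (h q) \<le> D" and t: "0 \<le> t" "t \<le> dist x q"
  shows "dist (\<sigma> t) (h (\<sigma> t)) \<le> D"
proof (cases "dist x q = 0")
  case True
  then show ?thesis
    using t geodesic_segment_start[OF \<sigma>] \<open>dist x (h x) \<le> D\<close> by simp
next
  case False
  define l where "l = t / dist x q"
  have "0 \<le> l" "l \<le> 1" and "t = l * dist x q"
    using t False unfolding l_def by auto
  then show ?thesis
    using CAT0_displacement_convex[OF cat h \<sigma>, of l] assms(4,5)
      convex_bound_le[of "dist x (h x)" D "dist q (h q)" "1 - l" l] by simp
qed

lemma compact_PiE_cballs:
  fixes x0 :: "'a::metric_space"
  assumes "proper_space TYPE('a)"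
  shows "compact (PiE UNIV (\<lambda>i. cball x0 (r i)))"
proof -
  have "\<And>i. compact (cball x0 (r i))"
    using assms unfolding proper_space_def by auto
  then have "compactin (product_topology (\<lambda>_. euclidean) UNIV) (PiE UNIV (\<lambda>i. cball x0 (r i)))"
    by (simp add: compactin_PiE compactin_euclidean_iff)
  then show ?thesis
    by (simp add: euclidean_product_topology compactin_euclidean_iff)
qed

lemma compact_filter_adherent_point:
  assumes "compact K" and "F \<noteq> bot" and "eventually (\<lambda>x. x \<in> K) F"
  obtains c where "c \<in> K" and "\<And>P. closed P \<Longrightarrow> eventually (\<lambda>x. x \<in> P) F \<Longrightarrow> c \<in> P"
proof -
  obtain c where "c \<in> K" and adherent: "inf (nhds c) F \<noteq> bot"
    using assms unfolding compact_filter by blast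
  have "c \<in> P" if "closed P" and P: "eventually (\<lambda>x. x \<in> P) F" for P
  proof (rule ccontr)
    assume "c \<notin> P"
    then have "eventually (\<lambda>x. x \<in> - P) (nhds c)"
      using \<open>closed P\<close> by (intro eventually_nhds_in_open) auto
    then have "eventually (\<lambda>x. False) (inf (nhds c) F)"
      using P unfolding eventually_inf by blast
    then show False
      using adherent by (simp add: eventually_False)
  qed
  then show ?thesis using that \<open>c \<in> K\<close> by blast
qed

lemma proper_geodesic_segments_limit_ray:
  fixes x0 :: "'a::metric_space"
  assumes proper: "proper_space TYPE('a)"
    and \<sigma>: "\<And>k. geodesic_segment (\<sigma> k) x0 (q k)"
    and escape: "filterlim (\<lambda>k. dist x0 (q k)) at_top sequentially"
  obtains c where "geodesic_ray c"
    and "\<And>t S. 0 \<le> t \<Longrightarrow> closed S \<Longrightarrow> (\<And>k. t \<le> dist x0 (q k) \<Longrightarrow> \<sigma> k t \<in> S) \<Longrightarrow> c t \<in> S"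
proof -
  text \<open>Extending each segment by constants makes it a point of \<open>\<Pi>\<^sub>t B(x\<^sub>0, |t|)\<close>.\<close>
  define \<gamma> where "\<gamma> k t = \<sigma> k (max 0 (min t (dist x0 (q k))))" for k t
  have "\<gamma> k \<in> PiE UNIV (\<lambda>t. cball x0 \<bar>t\<bar>)" for k
    unfolding \<gamma>_def using dist_geodesic_segment_start[OF \<sigma>] by auto
  then obtain c where adherent:
    "\<And>P. closed P \<Longrightarrow> eventually (\<lambda>k. \<gamma> k \<in> P) sequentially \<Longrightarrow> c \<in> P"
    using compact_filter_adherent_point[OF compact_PiE_cballs[OF proper, of x0 "\<lambda>t. \<bar>t\<bar>"],
        of "filtermap \<gamma> sequentially"]
    by (simp add: filtermap_bot_iff eventually_filtermap) blast
  have eventually_on_segment: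
    "eventually (\<lambda>k. \<gamma> k t = \<sigma> k t \<and> t \<le> dist x0 (q k)) sequentially" if "0 \<le> t" for t
    using filterlim_at_top[THEN iffD1, OF escape, rule_format, of t]
    by eventually_elim (auto simp: \<gamma>_def that)
  have "geodesic_ray c"
    unfolding geodesic_ray_def
  proof (intro allI impI)
    fix s t :: real
    assume "0 \<le> s" "0 \<le> t"
    have "closed {f::real \<Rightarrow> 'a. dist (f s) (f t) = \<bar>s - t\<bar>}"
      by (intro closed_Collect_eq continuous_intros continuous_on_product_coordinates)
    moreover have "eventually (\<lambda>k. \<gamma> k \<in> {f. dist (f s) (f t) = \<bar>s - t\<bar>}) sequentially"
      using eventually_conj[OF eventually_on_segment eventually_on_segment, OF \<open>0 \<le> s\<close> \<open>0 \<le> t\<close>]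
      by eventually_elim (use \<sigma> \<open>0 \<le> s\<close> \<open>0 \<le> t\<close> in \<open>auto simp: geodesic_segment_def\<close>)
    ultimately show "dist (c s) (c t) = \<bar>s - t\<bar>"
      using adherent by blast
  qed
  moreover have "c t \<in> S"
    if "0 \<le> t" and "closed S" and "\<And>k. t \<le> dist x0 (q k) \<Longrightarrow> \<sigma> k t \<in> S" for t S
  proof -
    have "closed {f::real \<Rightarrow> 'a. f t \<in> S}"
      using closed_vimage[OF \<open>closed S\<close> continuous_on_product_coordinates]
      by (simp add: vimage_def)
    moreover have "eventually (\<lambda>k. \<gamma> k \<in> {f. f t \<in> S}) sequentially"
      using eventually_on_segment[OF \<open>0 \<le> t\<close>] by eventually_elim (use that(3) in auto)
    ultimately show ?thesis
      using adherent by blast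
  qed
  ultimately show ?thesis using that by blast
qed

lemma isometries_dist: "f \<in> isometries \<Longrightarrow> dist (f x) (f y) = dist x y"
  unfolding isometries_def by blast

lemma isometries_inv: "f \<in> isometries \<Longrightarrow> inv f \<in> isometries"
  unfolding isometries_def by (auto simp: bij_imp_bij_inv) (metis bij_is_surj surj_f_inv_f)

lemma isometries_funpow: "f \<in> isometries \<Longrightarrow> f ^^ n \<in> isometries"
  by (induction n) (auto simp: isometries_def bij_comp)

lemma comp_funpow_commute:
  assumes "h \<circ> f = f \<circ> h"
  shows "h \<circ> f ^^ n = f ^^ n \<circ> h"
proof (induction n)
  case (Suc n)
  have "h \<circ> f ^^ Suc n = f \<circ> (h \<circ> f ^^ n)"
    by (simp only: assms funpow.simps(2) comp_assoc[symmetric])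
  also have "\<dots> = f ^^ Suc n \<circ> h"
    by (simp only: Suc.IH funpow.simps(2) comp_assoc)
  finally show ?case .
qed simp

lemma comp_inv_commute:
  assumes "bij f" and "h \<circ> f = f \<circ> h"
  shows "h \<circ> inv f = inv f \<circ> h"
proof (rule ext)
  fix y
  have "f (h (inv f y)) = h y"
    using assms by (metis comp_apply bij_is_surj surj_f_inv_f)
  then show "(h \<circ> inv f) y = (inv f \<circ> h) y"
    using assms(1) by (metis comp_apply bij_is_inj inv_f_f)
qed

lemma displacement_commuting_isometry_invariant:
  assumes "f \<in> isometries" and "h \<circ> f = f \<circ> h"
  shows "dist (f x) (h (f x)) = dist x (h x)"
  using assms isometries_dist[OF assms(1)] by (metis comp_apply)

lemma centralizer_dist_cyclic_orbit:
  assumes g: "g \<in> isometries" and h: "h \<in> centralizer g" and q: "q \<in> cyclic_orbit g x"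
  shows "dist q (h q) = dist x (h x)"
proof -
  have "h \<circ> g = g \<circ> h"
    using h unfolding centralizer_def by blast
  moreover from this have "h \<circ> inv g = inv g \<circ> h"
    using g unfolding isometries_def by (blast intro: comp_inv_commute)
  moreover obtain f n where "f = g \<or> f = inv g" and "q = (f ^^ n) x"
    using q unfolding cyclic_orbit_def by blast
  ultimately show ?thesis
    using g by (auto intro!: displacement_commuting_isometry_invariant isometries_funpow isometries_inv comp_funpow_commute)
qed

lemma asymptotic_sym: "asymptotic c c' \<Longrightarrow> asymptotic c' c"
  unfolding asymptotic_def by (simp add: dist_commute)

lemma asymptotic_trans:
  assumes "asymptotic c c'" and "asymptotic c' c''"
  shows "asymptotic c c''"
proof -
  obtain B B' where "\<forall>t\<ge>0. dist (c t) (c' t) \<le> B" and "\<forall>t\<ge>0. dist (c' t) (c'' t) \<le> B'"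
    using assms unfolding asymptotic_def by blast
  then have "\<forall>t\<ge>0. dist (c t) (c'' t) \<le> B + B'"
    by (smt (verit) dist_triangle)
  then show ?thesis unfolding asymptotic_def by blast
qed

lemma geodesic_ray_isometry_comp: "f \<in> isometries \<Longrightarrow> geodesic_ray c \<Longrightarrow> geodesic_ray (f \<circ> c)"
  unfolding geodesic_ray_def by (simp add: isometries_dist)

lemma asymptotic_isometry_comp: "f \<in> isometries \<Longrightarrow> asymptotic c c' \<Longrightarrow> asymptotic (f \<circ> c) (f \<circ> c')"
  unfolding asymptotic_def by (simp add: isometries_dist)

lemma boundary_action_fixes_asymptotic_class:
  assumes h: "h \<in> isometries" and hc: "asymptotic c (h \<circ> c)"
  shows "boundary_action h {c'. geodesic_ray c' \<and> asymptotic c c'}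
    = {c'. geodesic_ray c' \<and> asymptotic c c'}"
proof (intro set_eqI iffI)
  fix x
  assume "x \<in> boundary_action h {c'. geodesic_ray c' \<and> asymptotic c c'}"
  then obtain c' where x: "x = h \<circ> c'" and "geodesic_ray c'" and "asymptotic c c'"
    unfolding boundary_action_def by blast
  then show "x \<in> {c'. geodesic_ray c' \<and> asymptotic c c'}"
    using h hc by (auto intro: geodesic_ray_isometry_comp asymptotic_trans asymptotic_isometry_comp)
next
  fix x
  assume x: "x \<in> {c'. geodesic_ray c' \<and> asymptotic c c'}"
  have hinv: "inv h \<in> isometries"
    using isometries_inv[OF h] .
  have "bij h"
    using h unfolding isometries_def by blast
  then have "inv h \<circ> (h \<circ> c) = c" and "h \<circ> (inv h \<circ> x) = x"
    by (simp_all add: fun_eq_iff bij_is_inj bij_is_surj surj_f_inv_f)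
  moreover have "asymptotic (inv h \<circ> (h \<circ> c)) (inv h \<circ> c)"
    using asymptotic_isometry_comp[OF hinv asymptotic_sym[OF hc]] .
  ultimately have "geodesic_ray (inv h \<circ> x) \<and> asymptotic c (inv h \<circ> x)"
    using x hinv by (auto intro: geodesic_ray_isometry_comp asymptotic_trans asymptotic_isometry_comp)
  then show "x \<in> boundary_action h {c'. geodesic_ray c' \<and> asymptotic c c'}"
    unfolding boundary_action_def using \<open>h \<circ> (inv h \<circ> x) = x\<close> by (metis (mono_tags, lifting) mem_Collect_eq)
qed

lemma unbounded_obtain_seq_dist_at_top:
  fixes a :: "'a::metric_space"
  assumes "\<not> bounded S"
  obtains q where "\<And>k. q k \<in> S" and "filterlim (\<lambda>k. dist a (q k)) at_top sequentially"
proof -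
  have "\<forall>k::nat. \<exists>y\<in>S. real k < dist a y"
    using assms unfolding bounded_any_center[of S a] by (meson not_le)
  then obtain q where q: "\<And>k. q k \<in> S" and far: "\<And>k. real k < dist a (q k)"
    by metis
  have "filterlim (\<lambda>k. dist a (q k)) at_top sequentially"
    by (rule filterlim_at_top_mono[OF filterlim_real_sequentially])
      (use far in \<open>auto intro: always_eventually less_imp_le\<close>)
  with q show ?thesis using that by blast
qed

lemma closed_displacement_sublevel:
  assumes "\<forall>a b. dist (h a) (h b) = dist a b"
  shows "closed {x. dist x (h x) \<le> D}"
proof -
  have "continuous_on UNIV h"
    unfolding continuous_on_iff using assms by metis
  then show ?thesis
    by (intro closed_Collect_le continuous_intros)
qed

theorem proposition19:
  fixes g :: "'a::metric_space \<Rightarrow> 'a"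
  assumes "proper_space TYPE('a)"
    and "CAT0 TYPE('a)"
    and "g \<in> isometries"
    and "\<forall>x. \<not> bounded (cyclic_orbit g x)"
  shows "\<exists>\<xi> \<in> visual_boundary TYPE('a). \<forall>h \<in> centralizer g. boundary_action h \<xi> = \<xi>"
proof -
  fix x0 :: 'a
  obtain q where q: "\<And>k. q k \<in> cyclic_orbit g x0"
    and escape: "filterlim (\<lambda>k. dist x0 (q k)) at_top sequentially"
    using unbounded_obtain_seq_dist_at_top assms(4) by metis
  have "\<forall>k. \<exists>c. geodesic_segment c x0 (q k)"
    using CAT0_geodesic_exists[OF assms(2)] by blast
  then obtain \<sigma> where \<sigma>: "\<And>k. geodesic_segment (\<sigma> k) x0 (q k)"
    by metis
  obtain c where ray: "geodesic_ray c"
    and limit: "\<And>t S. 0 \<le> t \<Longrightarrow> closed S \<Longrightarrow> (\<And>k. t \<le> dist x0 (q k) \<Longrightarrow> \<sigma> k t \<in> S) \<Longrightarrow> c t \<in> S"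
    using proper_geodesic_segments_limit_ray[OF assms(1) \<sigma> escape] by blast
  have "asymptotic c (h \<circ> c)" if h: "h \<in> centralizer g" for h
  proof -
    have iso: "\<forall>a b. dist (h a) (h b) = dist a b"
      using h unfolding centralizer_def isometries_def by blast
    let ?S = "{x. dist x (h x) \<le> dist x0 (h x0)}"
    have on_segments: "\<sigma> k t \<in> ?S" if "0 \<le> t" "t \<le> dist x0 (q k)" for k t
      using CAT0_displacement_on_segment_le[OF assms(2) iso \<sigma> _ _ that]
        centralizer_dist_cyclic_orbit[OF assms(3) h q] by simp
    have "c t \<in> ?S" if "0 \<le> t" for t
      using limit[OF that closed_displacement_sublevel[OF iso] on_segments[OF that]] .
    then show ?thesis
      unfolding asymptotic_def by auto
  qed
  then show ?thesis
    using ray boundary_action_fixes_asymptotic_class unfolding centralizer_def visual_boundary_def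
    by blast
qed

end
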